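(* Let $S,T$ be left inverse semi-braces, $\sigma,\delta,\mathfrak b$ as follows: $\sigma:T\to\mathrm{Aut}(S)$ a homomorphism from $(T,\cdot)$ into the automorphism group of the left inverse semi-brace $S$ (${}^ua=\sigma(u)(a)$), $\delta:S\to\mathrm{End}(T,+)$ a map ($u^a=\delta(a)(u)$), and $\mathfrak b$ a $\delta$-cocycle satisfying $\mathfrak b(a\,{}^ub,\lambda_a({}^uc))+(uv)^{\lambda_a({}^uc)}+u(\mathfrak b({}^{u^{-1}}(a^{-1}),c)+(u^{-1})^c)=u(\mathfrak b(b,c)+v^c)$ for all $a,b,c\in S$, $u,v\in T$. Let $B$ be the asymmetric product, i.e. $S\times T$ with $(a,u)+(b,v)=(a+b,\mathfrak b(a,b)+u^b+v)$, $(a,u)(b,v)=(a\,{}^ub,uv)$. Then, writing $\Omega^b_{u,v}=(u^{-1})^b+v$ and $Y=\mathfrak b({}^{u^{-1}}a^{-1},b)+\Omega^b_{u,v}$, the map $r_B$ associated to $B$ is given by $$r_B((a,u),(b,v))=\left(\left(\lambda_a({}^ub),\,u\,Y\right),\ \left({}^{Y^{-1}u^{-1}}\rho_{{}^ub}(a),\ Y^{-1}v\right)\right)$$ for all $(a,u),(b,v)\in S\times T$.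
   Context: An inverse semigroup is a semigroup $(S,\cdot)$ in which for each $a$ there is a unique $a^{-1}$ with $aa^{-1}a=a$, $a^{-1}aa^{-1}=a^{-1}$. A left inverse semi-brace is a triple $(S,+,\cdot)$ with $(S,+)$ a semigroup, $(S,\cdot)$ an inverse semigroup and $a(b+c)=ab+a(a^{-1}+c)$ for all $a,b,c$. Set $\lambda_a(b)=a(a^{-1}+b)$, $\rho_b(a)=(a^{-1}+b)^{-1}b$; the map associated to $X$ is $r_X(x,y)=(\lambda_x(y),\rho_y(x))$. An automorphism of the left inverse semi-brace $S$ is a bijection preserving both operations. A $\delta$-cocycle is a map $\mathfrak b:S\times S\to T$ with $\mathfrak b(a+b,c)+\mathfrak b(a,b)^c+(u^b)^c+v^c=\mathfrak b(a,b+c)+u^{b+c}+\mathfrak b(b,c)+v^c$ for all $a,b,c\in S$, $u,v\in T$. Under these hypotheses $B$ is a left inverse semi-brace. *)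

theory Defs
  imports Main
begin

definition inverse_semigroup :: "('a \<Rightarrow> 'a \<Rightarrow> 'a) \<Rightarrow> bool" where
  "inverse_semigroup mult \<longleftrightarrow>
     (\<forall>a b c. mult (mult a b) c = mult a (mult b c)) \<and>
     (\<forall>a. \<exists>!x. mult (mult a x) a = a \<and> mult (mult x a) x = x)"

definition inv_of :: "('a \<Rightarrow> 'a \<Rightarrow> 'a) \<Rightarrow> 'a \<Rightarrow> 'a" where
  "inv_of mult a = (THE x. mult (mult a x) a = a \<and> mult (mult x a) x = x)"

definition left_inverse_semi_brace :: "('a \<Rightarrow> 'a \<Rightarrow> 'a) \<Rightarrow> ('a \<Rightarrow> 'a \<Rightarrow> 'a) \<Rightarrow> bool" where
  "left_inverse_semi_brace add mult \<longleftrightarrow>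
     (\<forall>a b c. add (add a b) c = add a (add b c)) \<and>
     inverse_semigroup mult \<and>
     (\<forall>a b c. mult a (add b c) = add (mult a b) (mult a (add (inv_of mult a) c)))"

definition lam :: "('a \<Rightarrow> 'a \<Rightarrow> 'a) \<Rightarrow> ('a \<Rightarrow> 'a \<Rightarrow> 'a) \<Rightarrow> 'a \<Rightarrow> 'a \<Rightarrow> 'a" where
  "lam add mult a b = mult a (add (inv_of mult a) b)"

definition rho :: "('a \<Rightarrow> 'a \<Rightarrow> 'a) \<Rightarrow> ('a \<Rightarrow> 'a \<Rightarrow> 'a) \<Rightarrow> 'a \<Rightarrow> 'a \<Rightarrow> 'a" where
  "rho add mult b a = mult (inv_of mult (add (inv_of mult a) b)) b"

definition r_map :: "('a \<Rightarrow> 'a \<Rightarrow> 'a) \<Rightarrow> ('a \<Rightarrow> 'a \<Rightarrow> 'a) \<Rightarrow> 'a \<Rightarrow> 'a \<Rightarrow> 'a \<times> 'a" where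
  "r_map add mult x y = (lam add mult x y, rho add mult y x)"

definition lisb_automorphism :: "('a \<Rightarrow> 'a \<Rightarrow> 'a) \<Rightarrow> ('a \<Rightarrow> 'a \<Rightarrow> 'a) \<Rightarrow> ('a \<Rightarrow> 'a) \<Rightarrow> bool" where
  "lisb_automorphism add mult f \<longleftrightarrow> bij f \<and>
     (\<forall>a b. f (add a b) = add (f a) (f b)) \<and> (\<forall>a b. f (mult a b) = mult (f a) (f b))"

definition delta_cocycle ::
  "('a \<Rightarrow> 'a \<Rightarrow> 'a) \<Rightarrow> ('b \<Rightarrow> 'b \<Rightarrow> 'b) \<Rightarrow> ('a \<Rightarrow> 'b \<Rightarrow> 'b) \<Rightarrow> ('a \<Rightarrow> 'a \<Rightarrow> 'b) \<Rightarrow> bool" where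
  "delta_cocycle addS addT \<delta> bb \<longleftrightarrow>
     (\<forall>a b c u v.
        addT (addT (addT (bb (addS a b) c) (\<delta> c (bb a b))) (\<delta> c (\<delta> b u))) (\<delta> c v)
      = addT (addT (addT (bb a (addS b c)) (\<delta> (addS b c) u)) (bb b c)) (\<delta> c v))"

definition asym_add ::
  "('a \<Rightarrow> 'a \<Rightarrow> 'a) \<Rightarrow> ('b \<Rightarrow> 'b \<Rightarrow> 'b) \<Rightarrow> ('a \<Rightarrow> 'b \<Rightarrow> 'b) \<Rightarrow> ('a \<Rightarrow> 'a \<Rightarrow> 'b)
   \<Rightarrow> 'a \<times> 'b \<Rightarrow> 'a \<times> 'b \<Rightarrow> 'a \<times> 'b" where
  "asym_add addS addT \<delta> bb x y =
     (addS (fst x) (fst y), addT (addT (bb (fst x) (fst y)) (\<delta> (fst y) (snd x))) (snd y))"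

definition asym_mult ::
  "('a \<Rightarrow> 'a \<Rightarrow> 'a) \<Rightarrow> ('b \<Rightarrow> 'b \<Rightarrow> 'b) \<Rightarrow> ('b \<Rightarrow> 'a \<Rightarrow> 'a)
   \<Rightarrow> 'a \<times> 'b \<Rightarrow> 'a \<times> 'b \<Rightarrow> 'a \<times> 'b" where
  "asym_mult multS multT \<sigma> x y = (multS (fst x) (\<sigma> (snd x) (fst y)), multT (snd x) (snd y))"

end

theory Submission
  imports Defs
begin

text \<open>The inverse of \<open>(a, u)\<close> in the asymmetric product is \<open>(\<sigma> u\<inverse> a\<inverse>, u\<inverse>)\<close>; since \<open>\<sigma>\<close> is
  a homomorphism into automorphisms, \<open>\<sigma> u\<close> and \<open>\<sigma> u\<inverse>\<close> cancel, and the formula for \<open>r\<^sub>B\<close> is then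
  a direct computation of \<open>\<lambda>\<close> and \<open>\<rho>\<close> in \<open>B\<close>. Only the multiplicative structure of \<open>T\<close>, the
  associativity of its sum and the automorphism property of \<open>\<sigma>\<close> enter.\<close>

lemma inverse_semigroup_assoc: "inverse_semigroup m \<Longrightarrow> m (m a b) c = m a (m b c)"
  unfolding inverse_semigroup_def by blast

lemma inv_of_regular:
  assumes "inverse_semigroup m"
  shows "m (m a (inv_of m a)) a = a" and "m (m (inv_of m a) a) (inv_of m a) = inv_of m a"
proof -
  have "\<exists>!x. m (m a x) a = a \<and> m (m x a) x = x"
    using assms unfolding inverse_semigroup_def by blast
  from theI'[OF this] show "m (m a (inv_of m a)) a = a" "m (m (inv_of m a) a) (inv_of m a) = inv_of m a"
    unfolding inv_of_def by auto
qed

lemma inv_of_eqI: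
  assumes "inverse_semigroup m" "m (m a x) a = a" "m (m x a) x = x"
  shows "inv_of m a = x"
proof -
  have "\<exists>!x. m (m a x) a = a \<and> m (m x a) x = x"
    using assms(1) unfolding inverse_semigroup_def by blast
  from the1_equality[OF this] assms(2,3) show ?thesis unfolding inv_of_def by blast
qed

lemma idempotent_mult_inv_of:
  assumes "inverse_semigroup m"
  shows "m (m a (inv_of m a)) (m a (inv_of m a)) = m a (inv_of m a)"
    and "m (m (inv_of m a) a) (m (inv_of m a) a) = m (inv_of m a) a"
  using inv_of_regular[OF assms, of a] by (simp_all flip: inverse_semigroup_assoc[OF assms])

lemma mult_hom_inv_of:
  assumes "inverse_semigroup m" "\<And>a b. f (m a b) = m (f a) (f b)"
  shows "f (inv_of m a) = inv_of m (f a)"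
  using inv_of_regular[OF assms(1), of a] assms(2)
  by (metis inv_of_eqI[OF assms(1)])

locale inverse_semigroup_action =
  fixes multS :: "'a \<Rightarrow> 'a \<Rightarrow> 'a" and multT :: "'b \<Rightarrow> 'b \<Rightarrow> 'b" and \<sigma> :: "'b \<Rightarrow> 'a \<Rightarrow> 'a"
  assumes S: "inverse_semigroup multS"
    and T: "inverse_semigroup multT"
    and act_mult: "\<sigma> u (multS x y) = multS (\<sigma> u x) (\<sigma> u y)"
    and act_inj: "inj (\<sigma> u)"
    and act_comp: "\<sigma> (multT u v) x = \<sigma> u (\<sigma> v x)"
begin

lemma idempotent_act:
  assumes "multT e e = e"
  shows "\<sigma> e x = x"
  using act_comp[of e e] assms act_inj[of e] by (metis injD)

lemma act_inv_of_cancel: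
  "\<sigma> u (\<sigma> (inv_of multT u) x) = x" "\<sigma> (inv_of multT u) (\<sigma> u x) = x"
  using idempotent_act[OF idempotent_mult_inv_of(1)[OF T, of u], of x]
    idempotent_act[OF idempotent_mult_inv_of(2)[OF T, of u], of x]
  unfolding act_comp by auto

lemma act_inv_of: "\<sigma> u (inv_of multS x) = inv_of multS (\<sigma> u x)"
  using mult_hom_inv_of[OF S, of "\<sigma> u"] act_mult by blast

lemma inv_of_asym_mult:
  "inv_of (asym_mult multS multT \<sigma>) (a, u) = (\<sigma> (inv_of multT u) (inv_of multS a), inv_of multT u)"
proof -
  let ?M = "asym_mult multS multT \<sigma>"
  define u' where "u' = inv_of multT u"
  define a' where "a' = inv_of multS a"
  have Tu: "multT (multT u u') u = u" "multT (multT u' u) u' = u'"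
    using inv_of_regular[OF T, of u] unfolding u'_def by auto
  have Sa: "multS (multS a a') a = a" "multS (multS a' a) a' = a'"
    using inv_of_regular[OF S, of a] unfolding a'_def by auto
  have e1: "\<sigma> (multT u u') z = z" and e2: "\<sigma> (multT u' u) z = z" for z
    using idempotent_act idempotent_mult_inv_of[OF T] unfolding u'_def by auto
  have cancel: "\<sigma> u (\<sigma> u' z) = z" "\<sigma> u' (\<sigma> u z) = z" for z
    using act_inv_of_cancel unfolding u'_def by auto
  let ?P = "\<lambda>x. ?M (?M (a, u) x) (a, u) = (a, u) \<and> ?M (?M x (a, u)) x = x"
  have "?P (\<sigma> u' a', u')"
    using Sa Tu by (simp add: asym_mult_def cancel e1 e2 act_comp flip: act_mult)
  moreover have "p = (\<sigma> u' a', u')" if "?P p" for p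
  proof -
    obtain x y where p: "p = (x, y)" by (cases p)
    have h1: "multS (multS a (\<sigma> u x)) (\<sigma> (multT u y) a) = a" "multT (multT u y) u = u"
      and h2: "multS (multS x (\<sigma> y a)) (\<sigma> (multT y u) x) = x" "multT (multT y u) y = y"
      using that unfolding p by (simp_all add: asym_mult_def act_comp)
    have y: "y = u'" using inv_of_eqI[OF T h1(2) h2(2)] unfolding u'_def by simp
    have "multS (multS (\<sigma> u x) a) (\<sigma> u x) = \<sigma> u x"
      using arg_cong[OF h2(1), of "\<sigma> u"] y Tu
      by (simp add: act_mult e1 inverse_semigroup_assoc[OF T] flip: act_comp)
    moreover have "multS (multS a (\<sigma> u x)) a = a" using h1(1) y by (simp add: e1)
    ultimately have "\<sigma> u x = a'" using inv_of_eqI[OF S] unfolding a'_def by metis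
    then show ?thesis using p y cancel(2)[of x] by simp
  qed
  ultimately have "inv_of ?M (a, u) = (\<sigma> u' a', u')"
    unfolding inv_of_def by (rule the_equality)
  then show ?thesis unfolding u'_def a'_def .
qed

end

locale asymmetric_product = inverse_semigroup_action multS multT \<sigma>
  for multS :: "'a \<Rightarrow> 'a \<Rightarrow> 'a" and multT :: "'b \<Rightarrow> 'b \<Rightarrow> 'b" and \<sigma> :: "'b \<Rightarrow> 'a \<Rightarrow> 'a" +
  fixes addS :: "'a \<Rightarrow> 'a \<Rightarrow> 'a" and addT :: "'b \<Rightarrow> 'b \<Rightarrow> 'b"
    and \<delta> :: "'a \<Rightarrow> 'b \<Rightarrow> 'b" and bb :: "'a \<Rightarrow> 'a \<Rightarrow> 'b"
  assumes act_add: "\<sigma> u (addS x y) = addS (\<sigma> u x) (\<sigma> u y)"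
    and addT_assoc: "addT (addT p q) r = addT p (addT q r)"
begin

abbreviation "addB \<equiv> asym_add addS addT \<delta> bb"
abbreviation "multB \<equiv> asym_mult multS multT \<sigma>"

lemma asym_add_inv_of:
  "addB (inv_of multB (a, u)) (b, v)
   = (addS (\<sigma> (inv_of multT u) (inv_of multS a)) b,
      addT (bb (\<sigma> (inv_of multT u) (inv_of multS a)) b) (addT (\<delta> b (inv_of multT u)) v))"
  by (simp add: inv_of_asym_mult asym_add_def addT_assoc)

lemma lam_asymmetric_product:
  "lam addB multB (a, u) (b, v)
   = (lam addS multS a (\<sigma> u b),
      multT u (addT (bb (\<sigma> (inv_of multT u) (inv_of multS a)) b) (addT (\<delta> b (inv_of multT u)) v)))"
  unfolding lam_def asym_add_inv_of
  by (simp add: asym_mult_def lam_def act_add act_inv_of_cancel)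

lemma rho_asymmetric_product:
  fixes a u b v
  defines "Y \<equiv> addT (bb (\<sigma> (inv_of multT u) (inv_of multS a)) b) (addT (\<delta> b (inv_of multT u)) v)"
  shows "rho addB multB (b, v) (a, u)
   = (\<sigma> (multT (inv_of multT Y) (inv_of multT u)) (rho addS multS (\<sigma> u b) a), multT (inv_of multT Y) v)"
proof -
  have "\<sigma> (inv_of multT u) (inv_of multS (addS (inv_of multS a) (\<sigma> u b)))
      = inv_of multS (addS (\<sigma> (inv_of multT u) (inv_of multS a)) b)"
    by (simp add: act_inv_of act_add act_inv_of_cancel)
  then show ?thesis
    unfolding rho_def asym_add_inv_of Y_def[symmetric]
    by (simp add: inv_of_asym_mult asym_mult_def act_mult act_comp act_inv_of_cancel)
qed

end

theorem proposition54:
  fixes addS multS :: "'a \<Rightarrow> 'a \<Rightarrow> 'a"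
    and addT multT :: "'b \<Rightarrow> 'b \<Rightarrow> 'b"
    and \<sigma> :: "'b \<Rightarrow> 'a \<Rightarrow> 'a"
    and \<delta> :: "'a \<Rightarrow> 'b \<Rightarrow> 'b"
    and bb :: "'a \<Rightarrow> 'a \<Rightarrow> 'b"
  assumes S: "left_inverse_semi_brace addS multS"
    and T: "left_inverse_semi_brace addT multT"
    and sigma_aut: "\<And>u. lisb_automorphism addS multS (\<sigma> u)"
    and sigma_hom: "\<And>u v. \<sigma> (multT u v) = \<sigma> u \<circ> \<sigma> v"
    and delta_end: "\<And>a u v. \<delta> a (addT u v) = addT (\<delta> a u) (\<delta> a v)"
    and cocycle: "delta_cocycle addS addT \<delta> bb"
    and compat: "\<And>a b c u v.
       addT (addT (bb (multS a (\<sigma> u b)) (lam addS multS a (\<sigma> u c)))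
                  (\<delta> (lam addS multS a (\<sigma> u c)) (multT u v)))
            (multT u (addT (bb (\<sigma> (inv_of multT u) (inv_of multS a)) c) (\<delta> c (inv_of multT u))))
       = multT u (addT (bb b c) (\<delta> c v))"
  shows "\<And>a u b v.
    let Y = addT (bb (\<sigma> (inv_of multT u) (inv_of multS a)) b)
                 (addT (\<delta> b (inv_of multT u)) v)
    in r_map (asym_add addS addT \<delta> bb) (asym_mult multS multT \<sigma>) (a, u) (b, v)
       = ((lam addS multS a (\<sigma> u b), multT u Y),
          (\<sigma> (multT (inv_of multT Y) (inv_of multT u)) (rho addS multS (\<sigma> u b) a),
           multT (inv_of multT Y) v))"
proof -
  interpret asymmetric_product multS multT \<sigma> addS addT \<delta> bb
  proof
    show "inverse_semigroup multS" "inverse_semigroup multT"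
      and "\<And>x y z. addT (addT x y) z = addT x (addT y z)"
      using S T unfolding left_inverse_semi_brace_def by auto
    show "\<And>u x y. \<sigma> u (multS x y) = multS (\<sigma> u x) (\<sigma> u y)"
      and "\<And>u. inj (\<sigma> u)" and "\<And>u x y. \<sigma> u (addS x y) = addS (\<sigma> u x) (\<sigma> u y)"
      using sigma_aut unfolding lisb_automorphism_def by (auto intro: bij_is_inj)
    show "\<And>u v x. \<sigma> (multT u v) x = \<sigma> u (\<sigma> v x)" by (simp add: sigma_hom)
  qed
  show "?thesis a u b v" for a u b v
    unfolding Let_def r_map_def lam_asymmetric_product rho_asymmetric_product ..
qed

end
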